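(* Let $R>0$ and $N\ge 1$ an integer. Let $$f_{\mathrm{CI}}(r)=\begin{cases}\frac{4r}{\pi R^2}\cos^{-1}\!\left(\frac{r}{2R}\right)-\frac{2r^2}{\pi R^4}\sqrt{R^2-\tfrac14 r^2}, & 0\le r\le 2R,\\ 0, & r>2R,\end{cases}$$ be the density of the distance between two independent uniformly distributed points in a disk of radius $R$, and let $$\Psi(r)=\frac{1}{\pi}\Big(4\csc^{-1}\!\left(\tfrac{2R}{r}\right)+2\left(\tfrac{r}{R}\right)^2\sec^{-1}\!\left(\tfrac{2R}{r}\right)-2\tan^{-1}\!\left(\tfrac{r}{\sqrt{4R^2-r^2}}\right)-\tfrac{r(r^2+2R^2)\sqrt{4R^2-r^2}}{4R^4}\Big),\quad 0<r<2R.$$ Suppose a device has $N$ aggregators whose distances $R_1,\dots,R_N$ to the device are i.i.d. with density $f_{\mathrm{CI}}$, and the device connects to the nearest one, at distance $r=\min_i R_i$. Let $\hat P_o>0$, $P_{\max}>0$, $P_{\mathrm{CP}}\ge0$, $\eta>0$, $\epsilon\in(0,1]$, $\alpha_{\mathrm g}>0$; the transmit power is $P_T=\min\{\hat P_o r^{\epsilon\alpha_{\mathrm g}},P_{\max}\}$ and $P_{\mathrm{TX}}=P_{\mathrm{CP}}+\eta^{-1}P_T$. Then $$\mathbb{E}[P_{\mathrm{TX}}]=P_{\mathrm{CP}}+\eta^{-1}N\Big(P_{\max}\int_{\zeta_{\mathrm{CI}}}^{2R}f_{\mathrm{CI}}(r)(1-\Psi(r))^{N-1}dr+\hat P_o\int_0^{\zeta_{\mathrm{CI}}}r^{\epsilon\alpha_{\mathrm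 g}}f_{\mathrm{CI}}(r)(1-\Psi(r))^{N-1}dr\Big),$$ where $\zeta_{\mathrm{CI}}=\min\{2R,(P_{\max}/\hat P_o)^{1/(\epsilon\alpha_{\mathrm g})}\}$. Moreover, for $L_o>0$, $\mu>0$, path loss $l(r)=L_o r^{\alpha_{\mathrm g}}$ and $\hat\mu=\mu/L_o$, $$\mathbb{P}(l(r)\le\mu)=N\int_0^{\min\{\hat\mu^{1/\alpha_{\mathrm g}},2R\}}f_{\mathrm{CI}}(r)(1-\Psi(r))^{N-1}dr,$$ which for $N=1$ equals $\min\{\Psi(\min\{\hat\mu^{1/\alpha_{\mathrm g}},2R\}),1\}$.
   Context: "Cluster-interior deployment": devices are uniformly distributed in a disk of radius $R$ and $N$ terrestrial aggregators are placed uniformly at random in the same disk; each device connects to its nearest aggregator. The path loss at distance $r$ is $L_o r^{\alpha_{\mathrm g}}$. Devices use fractional power control with factor $\epsilon$, open-loop constant $\hat P_o$ and maximum transmit power $P_{\max}$; $P_{\mathrm{CP}}$ is the circuit power and $\eta$ the power amplifier efficiency. The IoT coverage at maximum coupling loss $\mu$ (linear) is the probability that the path loss is at most $\mu$. *)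

theory Defs
  imports "HOL-Probability.Probability"
begin

definition arccsc :: "real \<Rightarrow> real" where "arccsc x = arcsin (1 / x)"
definition arcsec :: "real \<Rightarrow> real" where "arcsec x = arccos (1 / x)"

definition f_CI :: "real \<Rightarrow> real \<Rightarrow> real" where
  "f_CI R r = (if 0 \<le> r \<and> r \<le> 2 * R then
      4 * r / (pi * R^2) * arccos (r / (2 * R))
      - 2 * r^2 / (pi * R^4) * sqrt (R^2 - r^2 / 4)
    else 0)"

text \<open>The function Psi of the paper on 0 < r < 2R; extended by 0 for r <= 0 and by its limit
  value 1 for r >= 2R.\<close>
definition Psi_CI :: "real \<Rightarrow> real \<Rightarrow> real" where
  "Psi_CI R r = (if r \<le> 0 then 0 else if r \<ge> 2 * R then 1 else
      (1 / pi) * (4 * arccsc (2 * R / r) + 2 * (r / R)^2 * arcsec (2 * R / r)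
        - 2 * arctan (r / sqrt (4 * R^2 - r^2))
        - r * (r^2 + 2 * R^2) * sqrt (4 * R^2 - r^2) / (4 * R^4)))"

end

theory Submission
  imports Defs
begin

(* Psi_CI is an antiderivative of f_CI: since arccsc (2R/r) and arctan (r / sqrt (4R^2 - r^2)) are
   both arcsin (r/2R), Psi_CI is a polynomial-trigonometric closed form whose derivative is f_CI.
   So Psi_CI is the distribution function of each R_i, and by independence the nearest distance
   min R_i has distribution function 1 - (1 - Psi_CI)^N, with density N f_CI (1 - Psi_CI)^(N-1).
   The mean power is the integral of the transmit power against this density, split at the
   distance zeta beyond which the power control saturates at Pmax; the coverage probability is
   this distribution function at the distance where the path loss reaches mu. *)

lemma mult_powr_le_iff_le_powr:
  fixes a c p r :: real
  assumes "0 \<le> r" "0 < a" "0 < c" "0 \<le> p"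
  shows "a * r powr c \<le> p \<longleftrightarrow> r \<le> (p / a) powr (1 / c)"
proof -
  have "r powr c \<le> p / a \<longleftrightarrow> r \<le> (p / a) powr (1 / c)"
  proof
    assume "r powr c \<le> p / a"
    then have "(r powr c) powr (1 / c) \<le> (p / a) powr (1 / c)"
      using assms by (intro powr_mono2) auto
    then show "r \<le> (p / a) powr (1 / c)"
      using assms by (simp add: powr_powr)
  next
    assume "r \<le> (p / a) powr (1 / c)"
    then have "r powr c \<le> ((p / a) powr (1 / c)) powr c"
      using assms by (intro powr_mono2) auto
    then show "r powr c \<le> p / a"
      using assms by (simp add: powr_powr)
  qed
  then show ?thesis
    using assms(2) by (simp add: pos_le_divide_eq mult.commute)
qed

lemma integral_lborel_eq_interval_integral:
  fixes f :: "real \<Rightarrow> real"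
  assumes "a \<le> b" and "\<And>x. x \<notin> {a..b} \<Longrightarrow> f x = 0"
  shows "(LINT x|lborel. f x) = (LBINT x=a..b. f x)"
proof -
  have "(LINT x|lborel. f x) = (LINT x:{a..b}|lborel. f x)"
    unfolding set_lebesgue_integral_def
    by (rule Bochner_Integration.integral_cong) (use assms(2) in \<open>auto simp: indicator_def\<close>)
  then show ?thesis
    using assms(1) by (simp add: interval_integral_Icc)
qed

lemma isCont_comp_clamp:
  fixes g :: "real \<Rightarrow> 'b::topological_space"
  assumes "a \<le> b" and "continuous_on {a..b} g"
  shows "isCont (\<lambda>x. g (max a (min x b))) x"
proof -
  have "continuous_on UNIV (\<lambda>x. g (max a (min x b)))"
    by (rule continuous_on_compose2[OF assms(2)]) (use assms(1) in \<open>auto intro!: continuous_intros\<close>)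
  then show ?thesis
    by (simp add: continuous_on_eq_continuous_at)
qed

lemma has_integral_interior_derivative:
  fixes F f :: "real \<Rightarrow> real"
  assumes "a \<le> b" and "continuous_on {a..b} F"
    and "\<And>x. a < x \<Longrightarrow> x < b \<Longrightarrow> (F has_real_derivative f x) (at x)"
  shows "(f has_integral F b - F a) {a..b}"
  using assms by (intro fundamental_theorem_of_calculus_interior)
    (auto simp: has_real_derivative_iff_has_vector_derivative[symmetric])

lemma interval_integral_interior_derivative:
  fixes F f :: "real \<Rightarrow> real"
  assumes "a \<le> b" and "continuous_on {a..b} F" and "continuous_on {a..b} f"
    and "\<And>x. a < x \<Longrightarrow> x < b \<Longrightarrow> (F has_real_derivative f x) (at x)"
  shows "(LBINT x=a..b. f x) = F b - F a"
proof -
  have "set_integrable lborel {a..b} f"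
    using assms(3) by (rule borel_integrable_atLeastAtMost')
  then show ?thesis
    using assms(1) has_integral_interior_derivative[OF assms(1,2,4)]
    by (simp add: interval_integral_eq_integral integral_unique)
qed

lemma nn_integral_atMost_interior_derivative:
  fixes F f :: "real \<Rightarrow> real"
  assumes "a \<le> b" and "continuous_on {a..b} F"
    and "\<And>x. a < x \<Longrightarrow> x < b \<Longrightarrow> (F has_real_derivative f x) (at x)"
    and "\<And>x. 0 \<le> f x" and "\<And>x. x \<notin> {a..b} \<Longrightarrow> f x = 0"
  shows "(\<integral>\<^sup>+x. ennreal (f x) * indicator {..t} x \<partial>lborel) = ennreal (F (max a (min t b)) - F a)"
proof (cases "t < a")
  case True
  then have "(\<lambda>x. ennreal (f x) * indicator {..t} x) = (\<lambda>x. 0)"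
    using assms(5) by (force simp: indicator_def fun_eq_iff)
  then show ?thesis
    using True by simp
next
  case False
  define d where "d = min t b"
  have d: "a \<le> d" "d \<le> b"
    using False assms(1) by (auto simp: d_def)
  have "\<And>x. ennreal (f x) * indicator {..t} x = ennreal (f x) * indicator {a..d} x"
    using assms(5) False by (auto simp: indicator_def d_def)
  then have "(\<integral>\<^sup>+x. ennreal (f x) * indicator {..t} x \<partial>lborel) = (\<integral>\<^sup>+x\<in>{a..d}. ennreal (f x) \<partial>lborel)"
    by (simp add: mult.commute)
  also have "\<dots> = ennreal (F d - F a)"
    using d assms by (intro nn_integral_has_integral_lebesgue' has_integral_interior_derivative)
      (auto intro: continuous_on_subset)
  finally show ?thesis
    using d by (simp add: d_def)
qed

section \<open>Distance between two uniform points in a disk\<close>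

definition Psi_CI_closed :: "real \<Rightarrow> real \<Rightarrow> real" where
  "Psi_CI_closed R r = (2 * arcsin (r / (2 * R)) + 2 * (r / R)^2 * arccos (r / (2 * R))
      - r * (r^2 + 2 * R^2) * sqrt (4 * R^2 - r^2) / (4 * R^4)) / pi"

definition f_CI_closed :: "real \<Rightarrow> real \<Rightarrow> real" where
  "f_CI_closed R r = 4 * r / (pi * R^2) * arccos (r / (2 * R))
      - 2 * r^2 / (pi * R^4) * sqrt (R^2 - r^2 / 4)"

lemma Psi_CI_eq_closed:
  assumes R: "R > 0" and r: "0 \<le> r" "r \<le> 2 * R"
  shows "Psi_CI R r = Psi_CI_closed R r"
proof -
  consider "r = 0" | "r = 2 * R" | "0 < r" "r < 2 * R"
    using r by linarith
  then show ?thesis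
  proof cases
    case 3
    define u where "u = r / (2 * R)"
    have u: "-1 < u" "u < 1" "1 / (2 * R / r) = u"
      using R 3 by (auto simp: u_def field_simps)
    have "4 * R^2 - r^2 = (2 * R)^2 * (1 - u^2)"
      using R by (simp add: u_def field_simps power2_eq_square)
    then have "r / sqrt (4 * R^2 - r^2) = u / sqrt (1 - u^2)"
      using R by (simp add: real_sqrt_mult u_def)
    then have "arctan (r / sqrt (4 * R^2 - r^2)) = arcsin u"
      using arcsin_arctan[OF u(1,2)] by simp
    then show ?thesis
      using 3 u unfolding Psi_CI_def Psi_CI_closed_def arccsc_def arcsec_def u_def
      by (simp add: diff_divide_distrib add_divide_distrib)
  qed (use R in \<open>simp_all add: Psi_CI_def Psi_CI_closed_def power2_eq_square\<close>)
qed

lemma f_CI_closed_at_0: "f_CI_closed R 0 = 0"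
  by (simp add: f_CI_closed_def)

lemma f_CI_closed_at_diameter: "R > 0 \<Longrightarrow> f_CI_closed R (2 * R) = 0"
  by (simp add: f_CI_closed_def power2_eq_square)

lemma Psi_CI_clamp: "R > 0 \<Longrightarrow> Psi_CI R (max 0 (min x (2 * R))) = Psi_CI R x"
  by (auto simp: Psi_CI_def max_def min_def)

lemma Psi_CI_eq_closed_clamp:
  "R > 0 \<Longrightarrow> Psi_CI R = (\<lambda>x. Psi_CI_closed R (max 0 (min x (2 * R))))"
  using Psi_CI_clamp Psi_CI_eq_closed by (simp add: fun_eq_iff)

lemma f_CI_eq_closed_clamp:
  assumes "R > 0"
  shows "f_CI R = (\<lambda>x. f_CI_closed R (max 0 (min x (2 * R))))"
proof
  fix x
  show "f_CI R x = f_CI_closed R (max 0 (min x (2 * R)))"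
    using assms f_CI_closed_at_0 f_CI_closed_at_diameter
    by (cases "0 \<le> x \<and> x \<le> 2 * R") (auto simp: f_CI_def f_CI_closed_def max_def min_def)
qed

lemma has_real_derivative_Psi_CI_closed:
  assumes R: "R > 0" and r: "0 < r" "r < 2 * R"
  shows "(Psi_CI_closed R has_real_derivative f_CI_closed R r) (at r)"
proof -
  define s where "s = sqrt (4 * R^2 - r^2)"
  have "r^2 < (2 * R)^2"
    using r by (intro power_strict_mono) auto
  then have pos: "4 * R^2 - r^2 > 0"
    by (simp add: power_mult_distrib)
  then have s: "s > 0" "s^2 = 4 * R^2 - r^2"
    by (auto simp: s_def)
  have u: "-1 < r / (2 * R)" "r / (2 * R) < 1"
    using R r by (auto simp: field_simps)
  have sqrt_arcsin: "sqrt (1 - (r / (2 * R))^2) = s / (2 * R)"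
    using R s by (intro real_sqrt_unique) (auto simp: field_simps power2_eq_square)
  have sqrt_f: "sqrt (R^2 - r^2 / 4) = s / 2"
    using R s by (intro real_sqrt_unique) (auto simp: field_simps power2_eq_square)
  show ?thesis
    unfolding Psi_CI_closed_def[abs_def] f_CI_closed_def
    using u pos R s
    by (auto intro!: derivative_eq_intros simp: sqrt_arcsin sqrt_f s_def[symmetric])
      (simp add: field_simps, algebra)
qed

lemma continuous_on_Psi_CI_closed: "R > 0 \<Longrightarrow> continuous_on {0..2 * R} (Psi_CI_closed R)"
  unfolding Psi_CI_closed_def[abs_def] by (intro continuous_intros) (auto simp: field_simps)

lemma continuous_on_f_CI_closed: "R > 0 \<Longrightarrow> continuous_on {0..2 * R} (f_CI_closed R)"
  unfolding f_CI_closed_def[abs_def] by (intro continuous_intros) (auto simp: field_simps)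

lemma continuous_on_Psi_CI: "R > 0 \<Longrightarrow> continuous_on A (Psi_CI R)"
  unfolding Psi_CI_eq_closed_clamp
  by (intro continuous_at_imp_continuous_on ballI isCont_comp_clamp continuous_on_Psi_CI_closed) auto

lemma continuous_on_f_CI: "R > 0 \<Longrightarrow> continuous_on A (f_CI R)"
  unfolding f_CI_eq_closed_clamp
  by (intro continuous_at_imp_continuous_on ballI isCont_comp_clamp continuous_on_f_CI_closed) auto

lemma has_real_derivative_Psi_CI:
  assumes R: "R > 0" and x: "0 < x" "x < 2 * R"
  shows "(Psi_CI R has_real_derivative f_CI R x) (at x)"
proof -
  have "(Psi_CI R has_real_derivative f_CI_closed R x) (at x)"
    using has_real_derivative_Psi_CI_closed[OF assms]
    by (rule has_field_derivative_transform_within_open[where S = "{0<..<2 * R}"])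
      (use x R in \<open>auto simp: Psi_CI_eq_closed\<close>)
  then show ?thesis
    using x by (simp add: f_CI_def f_CI_closed_def)
qed

lemma f_CI_nonneg:
  assumes R: "R > 0"
  shows "f_CI R r \<ge> 0"
proof (cases "0 \<le> r \<and> r \<le> 2 * R")
  case True
  define u where "u = r / (2 * R)"
  define t where "t = arccos u"
  have u: "0 \<le> u" "u \<le> 1"
    using R True by (auto simp: u_def field_simps)
  have t: "0 \<le> t" "cos t = u" "sin t = sqrt (1 - u^2)"
    using u by (auto simp: t_def sin_arccos arccos_lbound)
  \<comment> \<open>f_CI R r = 4 r / (pi R^2) * (t - sin (2 t) / 2)\<close>
  have "sin (2 * t) \<le> 2 * t"
    using t by (intro sin_x_le_x) auto
  then have "u * sqrt (1 - u^2) \<le> t"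
    using t sin_double[of t] by (simp add: mult.commute)
  moreover have "R^2 - r^2 / 4 = R^2 * (1 - u^2)"
    using R by (simp add: u_def field_simps power2_eq_square)
  then have "sqrt (R^2 - r^2 / 4) = R * sqrt (1 - u^2)"
    using R by (simp add: real_sqrt_mult)
  then have "2 * r^2 / (pi * R^4) * sqrt (R^2 - r^2 / 4) = 4 * r / (pi * R^2) * (u * sqrt (1 - u^2))"
    using R unfolding u_def by (simp add: field_simps power2_eq_square power4_eq_xxxx)
  then have "f_CI R r = 4 * r / (pi * R^2) * (t - u * sqrt (1 - u^2))"
    using True unfolding f_CI_def t_def u_def by (simp add: right_diff_distrib)
  ultimately show ?thesis
    using R True by simp
qed (auto simp: f_CI_def)

lemma f_CI_eq_0: "x \<notin> {0..2 * R} \<Longrightarrow> f_CI R x = 0"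
  unfolding f_CI_def by auto

lemma Psi_CI_bounds:
  assumes R: "R > 0"
  shows "0 \<le> Psi_CI R x \<and> Psi_CI R x \<le> 1"
proof (cases "0 \<le> x \<and> x \<le> 2 * R")
  case True
  have mono: "Psi_CI R a \<le> Psi_CI R b" if "0 \<le> a" "a \<le> b" "b \<le> 2 * R" for a b
  proof (rule DERIV_nonneg_imp_increasing_open[OF \<open>a \<le> b\<close> _ continuous_on_Psi_CI[OF R]])
    fix y assume "a < y" "y < b"
    then show "\<exists>D. (Psi_CI R has_real_derivative D) (at y) \<and> 0 \<le> D"
      using that by (intro exI[of _ "f_CI R y"] conjI has_real_derivative_Psi_CI[OF R] f_CI_nonneg[OF R]) auto
  qed
  show ?thesis
    using mono[of 0 x] mono[of x "2 * R"] True R by (simp add: Psi_CI_def)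
qed (auto simp: Psi_CI_def)

section \<open>Distance to the nearest of N aggregators\<close>

definition Psi_nearest :: "nat \<Rightarrow> real \<Rightarrow> real \<Rightarrow> real" where
  "Psi_nearest N R r = 1 - (1 - Psi_CI R r) ^ N"

definition f_nearest :: "nat \<Rightarrow> real \<Rightarrow> real \<Rightarrow> real" where
  "f_nearest N R r = real N * (f_CI R r * (1 - Psi_CI R r) ^ (N - 1))"

lemma Psi_nearest_1: "Psi_nearest 1 R = Psi_CI R"
  by (simp add: Psi_nearest_def fun_eq_iff)

lemma f_nearest_1: "f_nearest 1 R = f_CI R"
  by (simp add: f_nearest_def fun_eq_iff)

lemma has_real_derivative_Psi_nearest:
  assumes "R > 0" and "0 < x" "x < 2 * R"
  shows "(Psi_nearest N R has_real_derivative f_nearest N R x) (at x)"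
  unfolding Psi_nearest_def[abs_def] f_nearest_def
  by (auto intro!: derivative_eq_intros has_real_derivative_Psi_CI[OF assms])

lemma continuous_on_Psi_nearest: "R > 0 \<Longrightarrow> continuous_on A (Psi_nearest N R)"
  unfolding Psi_nearest_def[abs_def] by (intro continuous_intros continuous_on_Psi_CI)

lemma continuous_on_f_nearest: "R > 0 \<Longrightarrow> continuous_on A (f_nearest N R)"
  unfolding f_nearest_def[abs_def] by (intro continuous_intros continuous_on_Psi_CI continuous_on_f_CI)

lemma borel_measurable_f_nearest: "R > 0 \<Longrightarrow> f_nearest N R \<in> borel_measurable borel"
  by (intro borel_measurable_continuous_onI continuous_on_f_nearest)

lemma f_nearest_nonneg: "R > 0 \<Longrightarrow> f_nearest N R x \<ge> 0"
  unfolding f_nearest_def using f_CI_nonneg[of R x] Psi_CI_bounds[of R x] by simp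

lemma f_nearest_eq_0: "x \<notin> {0..2 * R} \<Longrightarrow> f_nearest N R x = 0"
  by (simp add: f_nearest_def f_CI_eq_0)

lemma Psi_nearest_at_diameter: "R > 0 \<Longrightarrow> N \<ge> 1 \<Longrightarrow> Psi_nearest N R (2 * R) = 1"
  by (simp add: Psi_nearest_def Psi_CI_def)

lemma Psi_nearest_eq_interval_integral:
  assumes "R > 0" and "0 \<le> b" "b \<le> 2 * R"
  shows "Psi_nearest N R b = real N * (LBINT r=0..b. f_CI R r * (1 - Psi_CI R r) ^ (N - 1))"
proof -
  have "(LBINT r=ereal 0..b. f_nearest N R r) = Psi_nearest N R b - Psi_nearest N R 0"
    using assms
    by (intro interval_integral_interior_derivative continuous_on_Psi_nearest continuous_on_f_nearest
      has_real_derivative_Psi_nearest) auto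
  then show ?thesis
    by (simp add: zero_ereal_def Psi_nearest_def Psi_CI_def f_nearest_def interval_lebesgue_integral_mult_right)
qed

lemma nn_integral_f_nearest_atMost:
  assumes R: "R > 0"
  shows "(\<integral>\<^sup>+x. ennreal (f_nearest N R x) * indicator {..t} x \<partial>lborel) = ennreal (Psi_nearest N R t)"
proof -
  have "(\<integral>\<^sup>+x. ennreal (f_nearest N R x) * indicator {..t} x \<partial>lborel)
      = ennreal (Psi_nearest N R (max 0 (min t (2 * R))) - Psi_nearest N R 0)"
    using R f_nearest_nonneg[OF R] f_nearest_eq_0
    by (intro nn_integral_atMost_interior_derivative continuous_on_Psi_nearest has_real_derivative_Psi_nearest)
      auto
  then show ?thesis
    using R by (simp add: Psi_nearest_def Psi_CI_clamp Psi_CI_def)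
qed

lemma emeasure_density_f_nearest:
  assumes "R > 0" and "A \<in> sets borel"
  shows "emeasure (density lborel (f_nearest N R)) A = (\<integral>\<^sup>+x. ennreal (f_nearest N R x) * indicator A x \<partial>lborel)"
  using assms borel_measurable_f_nearest[OF assms(1)] by (simp add: emeasure_density)

lemma measure_density_f_nearest_atMost:
  "R > 0 \<Longrightarrow> measure (density lborel (f_nearest N R)) {..t} = Psi_nearest N R t"
  using nn_integral_f_nearest_atMost[of R N t] Psi_CI_bounds[of R t]
  by (simp add: measure_def emeasure_density_f_nearest Psi_nearest_def power_le_one)

lemma prob_space_density_f_nearest:
  assumes "R > 0" and "N \<ge> 1"
  shows "prob_space (density lborel (f_nearest N R))"
proof
  have "(\<integral>\<^sup>+x. ennreal (f_nearest N R x) * indicator UNIV x \<partial>lborel)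
      = (\<integral>\<^sup>+x. ennreal (f_nearest N R x) * indicator {..2 * R} x \<partial>lborel)"
    by (intro nn_integral_cong) (auto simp: indicator_def f_nearest_eq_0)
  then show "emeasure (density lborel (f_nearest N R)) (space (density lborel (f_nearest N R))) = 1"
    using assms by (simp add: emeasure_density_f_nearest nn_integral_f_nearest_atMost
      Psi_nearest_at_diameter)
qed

lemma (in prob_space) prob_Min_greater_indep:
  fixes X :: "'i \<Rightarrow> 'a \<Rightarrow> real"
  assumes X: "indep_vars (\<lambda>_. borel) X I" and I: "finite I" "I \<noteq> {}"
  shows "prob {x \<in> space M. t < Min ((\<lambda>i. X i x) ` I)} = (\<Prod>i\<in>I. prob {x \<in> space M. t < X i x})"
proof -
  have "{x \<in> space M. t < Min ((\<lambda>i. X i x) ` I)} = (\<Inter>i\<in>I. X i -` {t<..} \<inter> space M)"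
    using I by auto
  also have "prob \<dots> = (\<Prod>i\<in>I. prob (X i -` {t<..} \<inter> space M))"
    by (rule indep_varsD_finite[OF X I(2,1)]) (simp add: borel_open)
  finally show ?thesis
    by (simp add: vimage_def Int_def conj_commute)
qed

lemma (in prob_space) prob_le_eq_1_minus_prob_greater:
  fixes Y :: "'a \<Rightarrow> real"
  assumes "random_variable borel Y"
  shows "prob {x \<in> space M. Y x \<le> t} = 1 - prob {x \<in> space M. t < Y x}"
proof -
  have "{x \<in> space M. Y x \<le> t} = space M - {x \<in> space M. t < Y x}"
    by auto
  moreover have "{x \<in> space M. t < Y x} \<in> events"
    using assms by measurable
  ultimately show ?thesis
    by (simp add: prob_compl)
qed

lemma (in prob_space) distr_eq_density_if_cdf:
  fixes X :: "'a \<Rightarrow> real"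
  assumes "random_variable borel X" and "prob_space (density lborel h)"
    and "\<And>t. prob {x \<in> space M. X x \<le> t} = measure (density lborel h) {..t}"
  shows "distr M borel X = density lborel h"
proof (rule cdf_unique)
  show "real_distribution (distr M borel X)"
    using assms(1) by (rule real_distribution_distr)
  show "real_distribution (density lborel h)"
    using assms(2) by (simp add: real_distribution_def real_distribution_axioms_def)
  show "cdf (distr M borel X) = cdf (density lborel h)"
  proof
    fix t
    have "X -` {..t} \<inter> space M = {x \<in> space M. X x \<le> t}"
      by auto
    then show "cdf (distr M borel X) t = cdf (density lborel h) t"
      using assms(1,3) by (simp add: cdf_def measure_distr)
  qed
qed

lemma (in prob_space) prob_distributed_f_CI_atMost:
  assumes R: "R > 0" and X: "distributed M lborel X (\<lambda>x. ennreal (f_CI R x))"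
  shows "prob {x \<in> space M. X x \<le> t} = Psi_CI R t"
proof -
  have "emeasure M (X -` {..t} \<inter> space M) = (\<integral>\<^sup>+x. ennreal (f_CI R x) * indicator {..t} x \<partial>lborel)"
    using distributed_emeasure[OF X] by simp
  also have "\<dots> = ennreal (Psi_CI R t)"
    using nn_integral_f_nearest_atMost[OF R, of 1 t] by (simp only: f_nearest_1 Psi_nearest_1)
  finally have "emeasure M {x \<in> space M. X x \<le> t} = ennreal (Psi_CI R t)"
    by (simp add: vimage_def Int_def conj_commute)
  then show ?thesis
    using Psi_CI_bounds[OF R, of t] by (simp add: measure_def)
qed

theorem (in prob_space) distr_Min_f_CI:
  assumes R: "R > 0" and N: "N \<ge> 1"
    and indep: "indep_vars (\<lambda>_. borel) Rs {..<N}"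
    and distributed: "\<forall>i<N. distributed M lborel (Rs i) (\<lambda>x. ennreal (f_CI R x))"
  shows "distr M borel (\<lambda>x. Min ((\<lambda>i. Rs i x) ` {..<N})) = density lborel (f_nearest N R)"
proof (rule distr_eq_density_if_cdf)
  have Rs_rv: "\<And>i. i < N \<Longrightarrow> random_variable borel (Rs i)"
    using indep by (simp add: indep_vars_def)
  then show "random_variable borel (\<lambda>x. Min ((\<lambda>i. Rs i x) ` {..<N}))"
    by (intro borel_measurable_Min) auto
  show "prob_space (density lborel (f_nearest N R))"
    using R N by (rule prob_space_density_f_nearest)
  fix t
  have "{..<N} \<noteq> {}"
    using N by (simp add: lessThan_empty_iff)
  then have "prob {x \<in> space M. Min ((\<lambda>i. Rs i x) ` {..<N}) \<le> t}
      = 1 - (\<Prod>i<N. prob {x \<in> space M. t < Rs i x})"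
    using prob_le_eq_1_minus_prob_greater[OF \<open>random_variable borel (\<lambda>x. Min ((\<lambda>i. Rs i x) ` {..<N}))\<close>]
      prob_Min_greater_indep[OF indep] by simp
  also have "\<dots> = 1 - (\<Prod>i<N. 1 - Psi_CI R t)"
  proof (intro arg_cong[where f = "\<lambda>p. 1 - p"] prod.cong refl)
    fix i assume "i \<in> {..<N}"
    then show "prob {x \<in> space M. t < Rs i x} = 1 - Psi_CI R t"
      using prob_le_eq_1_minus_prob_greater[OF Rs_rv, of i t] prob_distributed_f_CI_atMost[OF R]
        distributed by simp
  qed
  also have "\<dots> = measure (density lborel (f_nearest N R)) {..t}"
    using R by (simp add: measure_density_f_nearest_atMost Psi_nearest_def)
  finally show "prob {x \<in> space M. Min ((\<lambda>i. Rs i x) ` {..<N}) \<le> t} = measure (density lborel (f_nearest N R)) {..t}" .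
qed

section \<open>Mean transmit power and coverage\<close>

lemma (in prob_space) expectation_min_mult_powr:
  fixes X :: "'a \<Rightarrow> real" and h :: "real \<Rightarrow> real"
  assumes distr: "distr M borel X = density lborel h" and X: "random_variable borel X"
    and h: "h \<in> borel_measurable borel" "\<And>r. 0 \<le> h r" "\<And>r. r \<notin> {0..u} \<Longrightarrow> h r = 0"
    and u: "0 \<le> u" and a: "0 < a" and p: "0 < p" and c: "0 < c"
  defines "\<zeta> \<equiv> min u ((p / a) powr (1 / c))"
  shows "expectation (\<lambda>x. min (a * X x powr c) p)
    = p * (LBINT r=\<zeta>..u. h r) + a * (LBINT r=0..\<zeta>. r powr c * h r)"
proof -
  have \<zeta>: "0 \<le> \<zeta>" "\<zeta> \<le> u"
    using u by (auto simp: \<zeta>_def)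
  define \<phi> where "\<phi> r = min (a * r powr c) p" for r
  have \<phi>_eq: "0 \<le> r \<Longrightarrow> \<phi> r = (if r \<le> (p / a) powr (1 / c) then a * r powr c else p)" for r
    using a p c by (simp add: \<phi>_def mult_powr_le_iff_le_powr[symmetric])
  have [measurable]: "\<phi> \<in> borel_measurable borel"
    unfolding \<phi>_def by measurable
  have "integrable M (\<lambda>x. \<phi> (X x))"
    using X p a by (intro integrable_const_bound[of _ p]) (auto simp: \<phi>_def)
  then have "integrable (density lborel h) \<phi>"
    using X by (simp add: integrable_distr_eq flip: distr)
  then have int: "integrable lborel (\<lambda>r. h r * \<phi> r)"
    using h by (simp add: integrable_density)
  have "expectation (\<lambda>x. \<phi> (X x)) = (\<integral>r. \<phi> r \<partial>density lborel h)"
    using X by (simp add: integral_distr flip: distr)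
  also have "\<dots> = (LINT r|lborel. h r * \<phi> r)"
    using h by (simp add: integral_density)
  also have "\<dots> = (LBINT r=0..u. h r * \<phi> r)"
    unfolding zero_ereal_def by (rule integral_lborel_eq_interval_integral) (use u h(3) in auto)
  also have "\<dots> = (LBINT r=0..\<zeta>. h r * \<phi> r) + (LBINT r=\<zeta>..u. h r * \<phi> r)"
    by (rule interval_integral_sum[symmetric])
      (use int in \<open>simp add: interval_lebesgue_integrable_def set_integrable_def
        mult.commute[of "indicator _ _"] integrable_real_mult_indicator\<close>)
  also have "(LBINT r=0..\<zeta>. h r * \<phi> r) = (LBINT r=0..\<zeta>. a * (r powr c * h r))"
  proof (rule interval_integral_cong)
    fix r assume "r \<in> einterval (min 0 (ereal \<zeta>)) (max 0 (ereal \<zeta>))"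
    then have "0 \<le> r" "r \<le> (p / a) powr (1 / c)"
      using \<zeta> by (auto simp: einterval_def \<zeta>_def)
    then show "h r * \<phi> r = a * (r powr c * h r)"
      by (simp add: \<phi>_eq)
  qed
  also have "(LBINT r=\<zeta>..u. h r * \<phi> r) = (LBINT r=\<zeta>..u. p * h r)"
  proof (rule interval_integral_cong)
    fix r assume "r \<in> einterval (min (ereal \<zeta>) (ereal u)) (max (ereal \<zeta>) (ereal u))"
    then have "\<zeta> < r" "r < u"
      using \<zeta> by (auto simp: einterval_def min_def max_def)
    then have "0 \<le> r" "\<not> r \<le> (p / a) powr (1 / c)"
      using \<zeta>(1) by (auto simp: \<zeta>_def min_def split: if_splits)
    then show "h r * \<phi> r = p * h r"
      by (simp add: \<phi>_eq)
  qed
  finally show ?thesis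
    by (simp add: \<phi>_def interval_lebesgue_integral_mult_right)
qed

lemma (in prob_space) prob_mult_powr_le:
  fixes X :: "'a \<Rightarrow> real" and h :: "real \<Rightarrow> real"
  assumes distr: "distr M borel X = density lborel h" and X: "random_variable borel X"
    and h: "h \<in> borel_measurable borel" "\<And>r. r \<notin> {0..u} \<Longrightarrow> h r = 0"
    and L: "0 < L" and m: "0 < m" and \<alpha>: "0 < \<alpha>"
  shows "prob {x \<in> space M. L * X x powr \<alpha> \<le> m} = measure (density lborel h) {..min ((m / L) powr (1 / \<alpha>)) u}"
proof -
  let ?A = "{r. L * r powr \<alpha> \<le> m}" and ?B = "{..min ((m / L) powr (1 / \<alpha>)) u}"
  have A_meas: "?A \<in> sets borel"
    by measurable
  have "prob {x \<in> space M. L * X x powr \<alpha> \<le> m} = measure (density lborel h) ?A"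
    using X A_meas by (simp add: measure_distr vimage_def Int_def conj_commute flip: distr)
  also have "\<dots> = measure (density lborel h) ?B"
    unfolding measure_def
  proof (rule arg_cong[where f = enn2real])
    have "\<And>r. 0 \<le> r \<Longrightarrow> r \<le> u \<Longrightarrow> L * r powr \<alpha> \<le> m \<longleftrightarrow> r \<le> min ((m / L) powr (1 / \<alpha>)) u"
      using L m \<alpha> by (simp add: mult_powr_le_iff_le_powr)
    then have "\<And>r. ennreal (h r) * indicator ?A r = ennreal (h r) * indicator ?B r"
      using h(2) by (fastforce simp: indicator_def)
    then show "emeasure (density lborel h) ?A = emeasure (density lborel h) ?B"
      using h A_meas by (simp add: emeasure_density)
  qed
  finally show ?thesis .
qed

lemma (in prob_space) expectation_min_mult_powr_nearest:
  fixes X :: "'a \<Rightarrow> real"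
  assumes distr: "distr M borel X = density lborel (f_nearest N R)" and X: "random_variable borel X"
    and R: "R > 0" and "0 < a" "0 < p" "0 < c"
  defines "\<zeta> \<equiv> min (2 * R) ((p / a) powr (1 / c))"
  shows "expectation (\<lambda>x. min (a * X x powr c) p) = real N *
    (p * (LBINT r=\<zeta>..2 * R. f_CI R r * (1 - Psi_CI R r) ^ (N - 1))
     + a * (LBINT r=0..\<zeta>. r powr c * f_CI R r * (1 - Psi_CI R r) ^ (N - 1)))"
proof -
  have "expectation (\<lambda>x. min (a * X x powr c) p)
      = p * (LBINT r=\<zeta>..2 * R. f_nearest N R r) + a * (LBINT r=0..\<zeta>. r powr c * f_nearest N R r)"
    unfolding \<zeta>_def using assms(3-)
    by (intro expectation_min_mult_powr[OF distr X borel_measurable_f_nearest[OF R] f_nearest_nonneg[OF R]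
      f_nearest_eq_0]) auto
  moreover have "f_nearest N R = (\<lambda>r. real N * (f_CI R r * (1 - Psi_CI R r) ^ (N - 1)))"
    "(\<lambda>r. r powr c * f_nearest N R r) = (\<lambda>r. real N * (r powr c * f_CI R r * (1 - Psi_CI R r) ^ (N - 1)))"
    by (simp_all add: fun_eq_iff f_nearest_def)
  ultimately show ?thesis
    by (simp add: interval_lebesgue_integral_mult_right algebra_simps)
qed

lemma (in prob_space) prob_mult_powr_le_nearest:
  fixes X :: "'a \<Rightarrow> real"
  assumes distr: "distr M borel X = density lborel (f_nearest N R)" and X: "random_variable borel X"
    and R: "R > 0" and "0 < L" "0 < m" "0 < \<alpha>"
  shows "prob {x \<in> space M. L * X x powr \<alpha> \<le> m} = Psi_nearest N R (min ((m / L) powr (1 / \<alpha>)) (2 * R))"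
  using prob_mult_powr_le[OF distr X borel_measurable_f_nearest[OF R] f_nearest_eq_0] assms
  by (simp add: measure_density_f_nearest_atMost)

theorem theorem2:
  fixes M :: "'a measure" and Rs :: "nat \<Rightarrow> 'a \<Rightarrow> real" and N :: nat
    and R Po Pmax Pcp \<eta> \<epsilon> \<alpha>g Lo \<mu> :: real
  assumes "prob_space M"
    and "R > 0" and "N \<ge> 1"
    and "prob_space.indep_vars M (\<lambda>_. borel) Rs {..<N}"
    and "\<forall>i<N. distributed M lborel (Rs i) (\<lambda>x. ennreal (f_CI R x))"
    and "Po > 0" and "Pmax > 0" and "Pcp \<ge> 0" and "\<eta> > 0"
    and "0 < \<epsilon>" and "\<epsilon> \<le> 1" and "\<alpha>g > 0"
    and "Lo > 0" and "\<mu> > 0"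
  shows "let rmin = (\<lambda>x. Min ((\<lambda>i. Rs i x) ` {..<N}));
             PT = (\<lambda>x. min (Po * rmin x powr (\<epsilon> * \<alpha>g)) Pmax);
             PTX = (\<lambda>x. Pcp + PT x / \<eta>);
             \<zeta> = min (2 * R) ((Pmax / Po) powr (1 / (\<epsilon> * \<alpha>g)));
             \<mu>h = \<mu> / Lo;
             b = min (\<mu>h powr (1 / \<alpha>g)) (2 * R);
             cov = measure M {x \<in> space M. Lo * rmin x powr \<alpha>g \<le> \<mu>}
         in (\<integral>x. PTX x \<partial>M) =
              Pcp + (1 / \<eta>) * real N *
                (Pmax * (LBINT r=\<zeta>..2 * R. f_CI R r * (1 - Psi_CI R r) ^ (N - 1))
                 + Po * (LBINT r=0..\<zeta>. r powr (\<epsilon> * \<alpha>g) * f_CI R r * (1 - Psi_CI R r) ^ (N - 1)))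
          \<and> cov = real N * (LBINT r=0..b. f_CI R r * (1 - Psi_CI R r) ^ (N - 1))
          \<and> (N = 1 \<longrightarrow> cov = min (Psi_CI R b) 1)"
proof -
  interpret prob_space M by fact
  define rmin where "rmin x = Min ((\<lambda>i. Rs i x) ` {..<N})" for x
  define b where "b = min ((\<mu> / Lo) powr (1 / \<alpha>g)) (2 * R)"
  have b: "0 \<le> b" "b \<le> 2 * R"
    using assms(2) by (auto simp: b_def)
  have rmin_rv: "random_variable borel rmin"
    using assms(4) unfolding rmin_def indep_vars_def by (intro borel_measurable_Min) auto
  have distr: "distr M borel rmin = density lborel (f_nearest N R)"
    unfolding rmin_def using assms(2-5) by (rule distr_Min_f_CI)
  have "integrable M (\<lambda>x. min (Po * rmin x powr (\<epsilon> * \<alpha>g)) Pmax)"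
    using rmin_rv assms by (intro integrable_const_bound[of _ Pmax]) auto
  moreover note expectation_min_mult_powr_nearest[OF distr rmin_rv, of Po Pmax "\<epsilon> * \<alpha>g"]
  moreover have cov: "prob {x \<in> space M. Lo * rmin x powr \<alpha>g \<le> \<mu>} = Psi_nearest N R b"
    unfolding b_def using assms by (intro prob_mult_powr_le_nearest[OF distr rmin_rv])
  moreover have "N = 1 \<longrightarrow> prob {x \<in> space M. Lo * rmin x powr \<alpha>g \<le> \<mu>} = min (Psi_CI R b) 1"
    using cov Psi_CI_bounds[OF assms(2), of b] by (auto simp: Psi_nearest_def)
  moreover note Psi_nearest_eq_interval_integral[OF assms(2) b, of N]
  ultimately show ?thesis
    using assms unfolding Let_def rmin_def[symmetric] b_def[symmetric]
    by (simp add: prob_space add_divide_distrib)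
qed

end
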